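(* Let $t\ge 1$ and $r\ge 2$ be integers and let $\mathcal H$ be an $r$-uniform hypergraph with shadow graph $G$. (i) If $\mathcal H$ is Berge-$B_t$-free, then $G$ contains no copy of $B_{3rt}$ in which each of its $3rt$ triangles is the core of a Berge triangle in $\mathcal H$. (ii) If $\mathcal H$ is Berge-$F_t$-free, then $G$ contains no copy of $F_{3rt}$ in which each of its $3rt$ triangles is the core of a Berge triangle in $\mathcal H$.
   Context: The shadow graph of a hypergraph $\mathcal H$ is the graph on $V(\mathcal H)$ in which $xy$ is an edge iff some hyperedge contains both $x$ and $y$. A triangle $xyz$ of the shadow graph is the core of a Berge triangle in $\mathcal H$ if there are three distinct hyperedges $h_1,h_2,h_3$ of $\mathcal H$ with $\{x,y\}\subseteq h_1$, $\{y,z\}\subseteq h_2$, $\{x,z\}\subseteq h_3$. For a graph $F$, $\mathcal H$ contains a Berge-$F$ if there is an injection $\varphi:V(F)\to V(\mathcal H)$ and an injection $f:E(F)\to E(\mathcal H)$ with $\{\varphi(x),\varphi(y)\}\subseteq f(xy)$ for all $xy\in E(F)$; Berge-$F$-free means no Berge-$F$. The book $B_s$ has vertices $u,v,w_1,\dots,w_s$ and edges $uv,uw_i,vw_i$ ($1\le i\le s$); its triangles are $uvw_i$. The fan $F_s$ has vertices $u,v_1,\dots,v_s,w_1,\dots,w_s$ and edges $uv_i,uw_i,v_iw_i$ ($1\le i\le s$); its triangles are $uv_iw_i$. *)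

theory Defs
  imports Main
begin

(* A hypergraph is a set H of hyperedges (sets of vertices); V(H) = \<Union>H. *)
definition uniform :: "nat \<Rightarrow> 'a set set \<Rightarrow> bool" where
  "uniform r H \<longleftrightarrow> (\<forall>h\<in>H. card h = r)"

definition shadow_adj :: "'a set set \<Rightarrow> 'a \<Rightarrow> 'a \<Rightarrow> bool" where
  "shadow_adj H x y \<longleftrightarrow> x \<noteq> y \<and> (\<exists>h\<in>H. {x, y} \<subseteq> h)"

definition berge_triangle_core :: "'a set set \<Rightarrow> 'a \<Rightarrow> 'a \<Rightarrow> 'a \<Rightarrow> bool" where
  "berge_triangle_core H x y z \<longleftrightarrow>
     (\<exists>h1\<in>H. \<exists>h2\<in>H. \<exists>h3\<in>H. h1 \<noteq> h2 \<and> h1 \<noteq> h3 \<and> h2 \<noteq> h3 \<and>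
        {x, y} \<subseteq> h1 \<and> {y, z} \<subseteq> h2 \<and> {x, z} \<subseteq> h3)"

(* A graph F is given by a vertex set FV and a set FE of 2-element edges {x,y}. *)
definition has_berge :: "'a set set \<Rightarrow> 'b set \<Rightarrow> 'b set set \<Rightarrow> bool" where
  "has_berge H FV FE \<longleftrightarrow>
     (\<exists>\<phi> f. inj_on \<phi> FV \<and> \<phi> ` FV \<subseteq> \<Union>H \<and> inj_on f FE \<and> f ` FE \<subseteq> H \<and>
        (\<forall>e\<in>FE. \<phi> ` e \<subseteq> f e))"

(* Book B_s on vertices 0 = u, 1 = v, i+1 = w_i (1 \<le> i \<le> s) *)
definition book_V :: "nat \<Rightarrow> nat set" where
  "book_V s = {0..s+1}"
definition book_E :: "nat \<Rightarrow> nat set set" where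
  "book_E s = {{0,1}} \<union> (\<Union>i\<in>{1..s}. {{0, i+1}, {1, i+1}})"
definition book_triangles :: "nat \<Rightarrow> (nat \<times> nat \<times> nat) set" where
  "book_triangles s = {(0, 1, i+1) | i. i \<in> {1..s}}"

(* Fan F_s on vertices 0 = u, 2i-1 = v_i, 2i = w_i (1 \<le> i \<le> s) *)
definition fan_V :: "nat \<Rightarrow> nat set" where
  "fan_V s = {0..2*s}"
definition fan_E :: "nat \<Rightarrow> nat set set" where
  "fan_E s = (\<Union>i\<in>{1..s}. {{0, 2*i-1}, {0, 2*i}, {2*i-1, 2*i}})"
definition fan_triangles :: "nat \<Rightarrow> (nat \<times> nat \<times> nat) set" where
  "fan_triangles s = {(0, 2*i-1, 2*i) | i. i \<in> {1..s}}"

definition shadow_copy_with_cores ::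
  "'a set set \<Rightarrow> 'b set \<Rightarrow> 'b set set \<Rightarrow> ('b \<times> 'b \<times> 'b) set \<Rightarrow> bool" where
  "shadow_copy_with_cores H FV FE T \<longleftrightarrow>
     (\<exists>\<phi>. inj_on \<phi> FV \<and> \<phi> ` FV \<subseteq> \<Union>H \<and>
        (\<forall>x\<in>FV. \<forall>y\<in>FV. {x, y} \<in> FE \<longrightarrow> shadow_adj H (\<phi> x) (\<phi> y)) \<and>
        (\<forall>(a, b, c)\<in>T. berge_triangle_core H (\<phi> a) (\<phi> b) (\<phi> c)))"

end

theory Submission
  imports Defs "HOL-Library.Disjoint_Sets"
begin

(* For every triangle j of the shadow copy of F_3rt (or B_3rt) fix three distinct hyperedges
   forming a Berge triangle on it. Each of them contains a vertex private to triangle j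
   (v_j or w_j for the fan, w_j for the book). The private vertex sets are disjoint and the
   three hyperedges span at most 3r vertices, so they meet the private vertices of at most 3r
   triangles. Choosing triangles greedily, and each time discarding the at most 3r triangles met,
   leaves t triangles such that for no two of them each meets the hyperedges of the other. A
   hyperedge shared by two triangles would do exactly that, so the 3t hyperedges are distinct
   and form a Berge-F_t. For the book the edge uv is served by one fixed hyperedge e through u
   and v: the at most r triangles whose w_j lies in e are discarded first, the remaining pages
   only use their two hyperedges through w_j (2r per greedy step), and these all avoid e. *)

lemma exists_subset_without_mutual_conflicts:
  fixes K :: "'i \<Rightarrow> 'i set"
  assumes "finite I" and "0 < m" and "t * m \<le> card I"
    and "\<And>i. i \<in> I \<Longrightarrow> i \<in> K i \<and> finite (K i) \<and> card (K i) \<le> m"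
  shows "\<exists>S\<subseteq>I. card S = t \<and> (\<forall>i\<in>S. \<forall>j\<in>S. i \<noteq> j \<longrightarrow> j \<notin> K i \<or> i \<notin> K j)"
  using assms(1,3,4)
proof (induction t arbitrary: I)
  case 0
  show ?case by (intro exI[of _ "{}"]) simp
next
  case (Suc t)
  have "I \<noteq> {}" using Suc.prems(2) \<open>0 < m\<close> by auto
  then obtain i where i: "i \<in> I" by blast
  have "card I - card (K i) \<le> card (I - K i)"
    by (rule diff_card_le_card_Diff) (use Suc.prems(3) i in blast)
  moreover have "card (K i) \<le> m" and "m + t * m \<le> card I"
    using Suc.prems(2) Suc.prems(3)[OF i] by simp_all
  ultimately have "t * m \<le> card (I - K i)" by linarith
  then obtain S where S: "S \<subseteq> I - K i" "card S = t"
    and no_conflict: "\<forall>i\<in>S. \<forall>j\<in>S. i \<noteq> j \<longrightarrow> j \<notin> K i \<or> i \<notin> K j"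
    using Suc.IH[of "I - K i"] Suc.prems by auto
  have "i \<notin> S" using S(1) Suc.prems(3) i by blast
  have "finite S" using S(1) Suc.prems(1) by (meson Diff_subset finite_subset)
  with \<open>i \<notin> S\<close> show ?case
    using S no_conflict i by (intro exI[of _ "insert i S"]) auto
qed

lemma card_members_meeting_le:
  assumes "disjoint_family_on P I" and "finite U"
  shows "card {j \<in> I. P j \<inter> U \<noteq> {}} \<le> card U"
proof -
  let ?K = "{j \<in> I. P j \<inter> U \<noteq> {}}"
  let ?pick = "\<lambda>j. SOME x. x \<in> P j \<inter> U"
  have pick: "?pick j \<in> P j \<inter> U" if "j \<in> ?K" for j
  proof -
    obtain x where "x \<in> P j \<inter> U" using \<open>j \<in> ?K\<close> by blast
    then show ?thesis by (rule someI)
  qed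
  have "inj_on ?pick ?K"
  proof (rule inj_onI)
    fix j j' assume j: "j \<in> ?K" and j': "j' \<in> ?K" and "?pick j = ?pick j'"
    then have "P j \<inter> P j' \<noteq> {}" using pick[OF j] pick[OF j'] by (metis IntD1 IntI empty_iff)
    then show "j = j'" using disjoint_family_onD[OF assms(1)] j j' by blast
  qed
  moreover have "?pick ` ?K \<subseteq> U" using pick by blast
  ultimately show ?thesis using card_inj_on_le assms(2) by blast
qed

lemma card_UN_uniform_le:
  assumes "uniform r H" and "0 < r" and "finite A" and "g ` A \<subseteq> H"
  shows "finite (\<Union>(g ` A))" and "card (\<Union>(g ` A)) \<le> card A * r"
proof -
  have edge: "finite (g a) \<and> card (g a) = r" if "a \<in> A" for a
    using assms that unfolding uniform_def by (metis card_ge_0_finite image_subset_iff)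
  then show "finite (\<Union>(g ` A))" using \<open>finite A\<close> by simp
  have "card (\<Union>(g ` A)) \<le> (\<Sum>a\<in>A. card (g a))" by (rule card_UN_le) fact
  also have "\<dots> = card A * r" using edge by simp
  finally show "card (\<Union>(g ` A)) \<le> card A * r" .
qed

lemma select_edge_disjoint_members:
  fixes g :: "'i \<Rightarrow> 'c \<Rightarrow> 'a set" and P :: "'i \<Rightarrow> 'a set"
  assumes "finite I" and "finite A" and "A \<noteq> {}" and "uniform r H" and "0 < r"
    and "disjoint_family_on P I"
    and g: "\<And>i. i \<in> I \<Longrightarrow> inj_on (g i) A \<and> g i ` A \<subseteq> H \<and> (\<forall>a\<in>A. g i a \<inter> P i \<noteq> {})"
    and "t * (card A * r) \<le> card I"
  obtains \<sigma> where "\<sigma> ` {1..t} \<subseteq> I" and "inj_on \<sigma> {1..t}"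
    and "inj_on (\<lambda>(k, a). g (\<sigma> k) a) ({1..t} \<times> A)"
proof -
  define K where "K i = {j \<in> I. P j \<inter> \<Union>(g i ` A) \<noteq> {}}" for i
  have K: "i \<in> K i \<and> finite (K i) \<and> card (K i) \<le> card A * r" if "i \<in> I" for i
  proof (intro conjI)
    show "i \<in> K i" using g[OF that] \<open>A \<noteq> {}\<close> that unfolding K_def by blast
    show "finite (K i)" using \<open>finite I\<close> by (simp add: K_def)
    have "g i ` A \<subseteq> H" using g[OF that] by blast
    then show "card (K i) \<le> card A * r"
      using card_members_meeting_le[OF \<open>disjoint_family_on P I\<close>]
        card_UN_uniform_le[OF \<open>uniform r H\<close> \<open>0 < r\<close> \<open>finite A\<close>]
      unfolding K_def by (meson le_trans)
  qed
  have "0 < card A * r" using \<open>finite A\<close> \<open>A \<noteq> {}\<close> \<open>0 < r\<close> by (simp add: card_gt_0_iff)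
  then obtain S where S: "S \<subseteq> I" "card S = t"
    and no_conflict: "\<forall>i\<in>S. \<forall>j\<in>S. i \<noteq> j \<longrightarrow> j \<notin> K i \<or> i \<notin> K j"
    using exists_subset_without_mutual_conflicts[of I "card A * r" t K] assms K by blast
  then obtain \<sigma> where \<sigma>: "bij_betw \<sigma> {1..t} S"
    using ex_bij_betw_nat_finite_1 \<open>finite I\<close> finite_subset by metis
  have "inj_on (\<lambda>(k, a). g (\<sigma> k) a) ({1..t} \<times> A)"
  proof (rule inj_onI, clarify)
    fix k a k' a'
    assume k: "k \<in> {1..t}" "a \<in> A" and k': "k' \<in> {1..t}" "a' \<in> A"
      and eq: "g (\<sigma> k) a = g (\<sigma> k') a'"
    have "\<sigma> k \<in> S" "\<sigma> k' \<in> S" using \<sigma> k k' by (auto dest: bij_betwE)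
    then have I: "\<sigma> k \<in> I" "\<sigma> k' \<in> I" and g_in: "inj_on (g (\<sigma> k)) A" using g S(1) by blast+
    show "k = k' \<and> a = a'"
    proof (cases "\<sigma> k = \<sigma> k'")
      case True
      then have "k = k'" using inj_onD[OF bij_betw_imp_inj_on[OF \<sigma>] True] k k' by blast
      then show ?thesis using inj_onD[OF g_in] eq k(2) k'(2) by auto
    next
      case False
      have "g (\<sigma> k) a \<inter> P (\<sigma> k) \<noteq> {}" "g (\<sigma> k') a' \<inter> P (\<sigma> k') \<noteq> {}"
        using g I k(2) k'(2) by blast+
      then have "\<sigma> k \<in> K (\<sigma> k')" "\<sigma> k' \<in> K (\<sigma> k)"
        using eq I k(2) k'(2) unfolding K_def by auto
      then show ?thesis using no_conflict \<open>\<sigma> k \<in> S\<close> \<open>\<sigma> k' \<in> S\<close> False by blast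
    qed
  qed
  then show thesis using that \<sigma> S(1) by (auto simp: bij_betw_def)
qed

lemma has_bergeI:
  assumes "inj_on \<psi> FV" and "\<psi> ` FV \<subseteq> \<Union>H"
    and "FE = \<epsilon> ` X" and "inj_on \<eta> X" and "\<eta> ` X \<subseteq> H"
    and cover: "\<And>x. x \<in> X \<Longrightarrow> \<psi> ` \<epsilon> x \<subseteq> \<eta> x"
  shows "has_berge H FV FE"
  unfolding has_berge_def
proof (intro exI conjI)
  let ?f = "\<eta> \<circ> inv_into X \<epsilon>"
  have into: "inv_into X \<epsilon> e \<in> X" if "e \<in> FE" for e
    using that \<open>FE = \<epsilon> ` X\<close> by (simp add: inv_into_into)
  then have "inv_into X \<epsilon> ` FE \<subseteq> X" by blast
  then show "inj_on ?f FE"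
    using \<open>FE = \<epsilon> ` X\<close> inj_on_subset[OF \<open>inj_on \<eta> X\<close>]
    by (intro comp_inj_on inj_on_inv_into) auto
  show "?f ` FE \<subseteq> H" using into \<open>\<eta> ` X \<subseteq> H\<close> by auto
  show "\<forall>e\<in>FE. \<psi> ` e \<subseteq> ?f e"
  proof
    fix e assume "e \<in> FE"
    then have "\<epsilon> (inv_into X \<epsilon> e) = e" using \<open>FE = \<epsilon> ` X\<close> by (simp add: f_inv_into_f)
    then show "\<psi> ` e \<subseteq> ?f e" using cover[OF into[OF \<open>e \<in> FE\<close>]] by simp
  qed
qed (fact assms)+

fun tri_edge :: "'b \<times> 'b \<times> 'b \<Rightarrow> nat \<Rightarrow> 'b set" where
  "tri_edge (x, y, z) i = (if i = 0 then {x, y} else if i = 1 then {y, z} else {x, z})"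

lemma image_tri_edge: "f ` tri_edge (x, y, z) i = tri_edge (f x, f y, f z) i"
  by simp

definition berge_triangle :: "'a set set \<Rightarrow> 'a \<times> 'a \<times> 'a \<Rightarrow> (nat \<Rightarrow> 'a set) \<Rightarrow> bool" where
  "berge_triangle H T h \<longleftrightarrow> inj_on h {0, 1, 2} \<and> (\<forall>i\<in>{0, 1, 2}. h i \<in> H \<and> tri_edge T i \<subseteq> h i)"

lemma berge_triangle_core_iff: "berge_triangle_core H x y z \<longleftrightarrow> (\<exists>h. berge_triangle H (x, y, z) h)"
proof
  assume "berge_triangle_core H x y z"
  then obtain h1 h2 h3 where "h1 \<in> H" "h2 \<in> H" "h3 \<in> H" "h1 \<noteq> h2" "h1 \<noteq> h3" "h2 \<noteq> h3"
    "{x, y} \<subseteq> h1" "{y, z} \<subseteq> h2" "{x, z} \<subseteq> h3"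
    unfolding berge_triangle_core_def by (elim bexE conjE) (rule that)
  then have "berge_triangle H (x, y, z) (\<lambda>i. if i = 0 then h1 else if i = 1 then h2 else h3)"
    unfolding berge_triangle_def by (auto simp: inj_on_def)
  then show "\<exists>h. berge_triangle H (x, y, z) h" by blast
next
  assume "\<exists>h. berge_triangle H (x, y, z) h"
  then obtain h where "berge_triangle H (x, y, z) h" ..
  then have "inj_on h {0, 1, 2}" and "h 0 \<in> H" "h 1 \<in> H" "h 2 \<in> H"
    and "{x, y} \<subseteq> h 0" "{y, z} \<subseteq> h 1" "{x, z} \<subseteq> h 2"
    unfolding berge_triangle_def by simp_all
  moreover have "h 0 \<noteq> h 1" "h 0 \<noteq> h 2" "h 1 \<noteq> h 2"
    using inj_onD[OF \<open>inj_on h {0, 1, 2}\<close>, of 0 1] inj_onD[OF \<open>inj_on h {0, 1, 2}\<close>, of 0 2]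
      inj_onD[OF \<open>inj_on h {0, 1, 2}\<close>, of 1 2] by auto
  ultimately show "berge_triangle_core H x y z"
    unfolding berge_triangle_core_def by blast
qed

lemma berge_triangle_image_edge:
  assumes "berge_triangle H (\<phi> x, \<phi> y, \<phi> z) h" and "i \<in> {0, 1, 2}"
  shows "\<phi> ` tri_edge (x, y, z) i \<subseteq> h i"
  using assms unfolding berge_triangle_def by (auto simp del: tri_edge.simps simp: image_tri_edge)

lemma fan_E_eq: "fan_E t = (\<lambda>(k, i). tri_edge (0, 2*k - 1, 2*k) i) ` ({1..t} \<times> {0, 1, 2})"
  unfolding fan_E_def Sigma_def image_UN by (simp add: insert_commute)

lemma has_berge_fanI:
  assumes "inj_on \<psi> (fan_V t)" and "\<psi> ` fan_V t \<subseteq> \<Union>H"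
    and "inj_on (\<lambda>(k, i). g k i) ({1..t} \<times> {0, 1, 2})"
    and "\<And>k i. k \<in> {1..t} \<Longrightarrow> i \<in> {0, 1, 2} \<Longrightarrow> g k i \<in> H \<and> \<psi> ` tri_edge (0, 2*k - 1, 2*k) i \<subseteq> g k i"
  shows "has_berge H (fan_V t) (fan_E t)"
proof (rule has_bergeI[OF assms(1,2) fan_E_eq assms(3)])
  show "(\<lambda>(k, i). g k i) ` ({1..t} \<times> {0, 1, 2}) \<subseteq> H" using assms(4) by fast
  fix x assume "x \<in> {1..t} \<times> {0, 1, 2::nat}"
  then obtain k i where "x = (k, i)" "k \<in> {1..t}" "i \<in> {0, 1, 2}" by blast
  then show "\<psi> ` (\<lambda>(k, i). tri_edge (0, 2*k - 1, 2*k) i) x \<subseteq> (\<lambda>(k, i). g k i) x"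
    using assms(4) unfolding prod.case by blast
qed

definition fan_relabel :: "(nat \<Rightarrow> nat) \<Rightarrow> nat \<Rightarrow> nat" where
  "fan_relabel \<sigma> x = (if x = 0 then 0 else 2 * \<sigma> ((x + 1) div 2) - x mod 2)"

lemma fan_relabel_triangle:
  assumes "1 \<le> k"
  shows "fan_relabel \<sigma> ` tri_edge (0, 2*k - 1, 2*k) i = tri_edge (0, 2 * \<sigma> k - 1, 2 * \<sigma> k) i"
proof -
  have "(2*k - 1) mod 2 = 1" using assms by presburger
  moreover have "2*k - 1 \<noteq> 0" "(2*k - 1 + 1) div 2 = k" "2*k \<noteq> 0" "(2*k + 1) div 2 = k"
    using assms by auto
  ultimately have "fan_relabel \<sigma> (2*k - 1) = 2 * \<sigma> k - 1" "fan_relabel \<sigma> (2*k) = 2 * \<sigma> k"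
    unfolding fan_relabel_def by auto
  moreover have "fan_relabel \<sigma> 0 = 0" by (simp add: fan_relabel_def)
  ultimately show ?thesis by simp
qed

lemma fan_relabel_embedding:
  assumes "inj_on \<sigma> {1..t}" and "\<sigma> ` {1..t} \<subseteq> {1..N}"
  shows "inj_on (fan_relabel \<sigma>) (fan_V t)" and "fan_relabel \<sigma> ` fan_V t \<subseteq> fan_V N"
proof -
  have block: "(x + 1) div 2 \<in> {1..t}" "\<sigma> ((x + 1) div 2) \<in> {1..N}" if "x \<in> fan_V t" "x \<noteq> 0" for x
  proof -
    show "(x + 1) div 2 \<in> {1..t}" using that unfolding fan_V_def by auto
    then show "\<sigma> ((x + 1) div 2) \<in> {1..N}" using assms(2) by blast
  qed
  have "fan_relabel (inv_into {1..t} \<sigma>) (fan_relabel \<sigma> x) = x" if x: "x \<in> fan_V t" for x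
  proof (cases "x = 0")
    case False
    define a where "a = (x + 1) div 2"
    define p where "p = x mod 2"
    obtain b where b: "\<sigma> a = Suc b"
      using block[OF x False] unfolding a_def by (cases "\<sigma> ((x + 1) div 2)") auto
    have "p < 2" by (simp add: p_def)
    then have "2 * Suc b - p \<noteq> 0" "(2 * Suc b - p + 1) div 2 = Suc b" "(2 * Suc b - p) mod 2 = p"
      by (cases p; simp)+
    moreover have "fan_relabel \<sigma> x = 2 * Suc b - p"
      using b False unfolding fan_relabel_def a_def p_def by simp
    moreover have "inv_into {1..t} \<sigma> (\<sigma> a) = a"
      using inv_into_f_f[OF assms(1) block(1)[OF x False]] by (simp add: a_def)
    ultimately have "fan_relabel (inv_into {1..t} \<sigma>) (fan_relabel \<sigma> x) = 2 * a - p"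
      using b unfolding fan_relabel_def by simp
    also have "\<dots> = x" unfolding a_def p_def by presburger
    finally show ?thesis .
  qed (simp add: fan_relabel_def)
  then show "inj_on (fan_relabel \<sigma>) (fan_V t)" by (rule inj_on_inverseI)
  show "fan_relabel \<sigma> ` fan_V t \<subseteq> fan_V N"
    using block unfolding fan_relabel_def fan_V_def by fastforce
qed

lemma book_E_eq: "book_E t = (\<lambda>(k, i). tri_edge (0, 1, k + 1) i) ` insert (0, 0) ({1..t} \<times> {1, 2})"
  unfolding book_E_def image_insert Sigma_def image_UN by (simp add: insert_commute)

lemma has_berge_bookI:
  assumes "inj_on \<psi> (book_V t)" and "\<psi> ` book_V t \<subseteq> \<Union>H"
    and "e \<in> H" and "\<psi> ` {0, 1} \<subseteq> e"
    and "inj_on (\<lambda>(k, i). g k i) ({1..t} \<times> {1, 2})" and "e \<notin> (\<lambda>(k, i). g k i) ` ({1..t} \<times> {1, 2})"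
    and "\<And>k i. k \<in> {1..t} \<Longrightarrow> i \<in> {1, 2} \<Longrightarrow> g k i \<in> H \<and> \<psi> ` tri_edge (0, 1, k + 1) i \<subseteq> g k i"
  shows "has_berge H (book_V t) (book_E t)"
proof (rule has_bergeI[where \<eta> = "\<lambda>(k, i). if k = 0 then e else g k i", OF assms(1,2) book_E_eq])
  let ?\<eta> = "\<lambda>(k, i). if k = 0 then e else g k i"
  have "?\<eta> ` ({1..t} \<times> {1, 2}) = (\<lambda>(k, i). g k i) ` ({1..t} \<times> {1, 2})"
    and "inj_on ?\<eta> ({1..t} \<times> {1, 2}) \<longleftrightarrow> inj_on (\<lambda>(k, i). g k i) ({1..t} \<times> {1, 2})"
    by (auto intro!: image_cong inj_on_cong)
  with assms(5,6) show "inj_on ?\<eta> (insert (0, 0) ({1..t} \<times> {1, 2}))"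
    by (simp add: inj_on_insert)
  show "?\<eta> ` insert (0, 0) ({1..t} \<times> {1, 2}) \<subseteq> H"
    using assms(3,7) by auto
  fix x assume "x \<in> insert (0, 0) ({1..t} \<times> {1, 2::nat})"
  then consider "x = (0, 0)" | k i where "x = (k, i)" "k \<in> {1..t}" "i \<in> {1, 2}" by blast
  then show "\<psi> ` (\<lambda>(k, i). tri_edge (0, 1, k + 1) i) x \<subseteq> ?\<eta> x"
  proof cases
    case 1
    then show ?thesis using assms(4) by simp
  next
    case (2 k i)
    then show ?thesis using assms(7) unfolding prod.case by simp
  qed
qed

definition book_relabel :: "(nat \<Rightarrow> nat) \<Rightarrow> nat \<Rightarrow> nat" where
  "book_relabel \<sigma> x = (if x \<le> 1 then x else \<sigma> (x - 1) + 1)"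

lemma book_relabel_triangle:
  assumes "1 \<le> k"
  shows "book_relabel \<sigma> ` tri_edge (0, 1, k + 1) i = tri_edge (0, 1, \<sigma> k + 1) i"
  using assms by (simp add: book_relabel_def insert_commute)

lemma book_relabel_embedding:
  assumes "inj_on \<sigma> {1..t}" and "\<sigma> ` {1..t} \<subseteq> {1..N}"
  shows "inj_on (book_relabel \<sigma>) (book_V t)" and "book_relabel \<sigma> ` book_V t \<subseteq> book_V N"
proof -
  have page: "x - 1 \<in> {1..t}" "\<sigma> (x - 1) \<in> {1..N}" if "x \<in> book_V t" "\<not> x \<le> 1" for x
  proof -
    show "x - 1 \<in> {1..t}" using that unfolding book_V_def by auto
    then show "\<sigma> (x - 1) \<in> {1..N}" using assms(2) by blast
  qed
  have "book_relabel (inv_into {1..t} \<sigma>) (book_relabel \<sigma> x) = x" if "x \<in> book_V t" for x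
    using page[OF that] inv_into_f_f[OF assms(1) page(1)[OF that]] unfolding book_relabel_def by auto
  then show "inj_on (book_relabel \<sigma>) (book_V t)" by (rule inj_on_inverseI)
  show "book_relabel \<sigma> ` book_V t \<subseteq> book_V N"
    using page unfolding book_relabel_def book_V_def by fastforce
qed

lemma berge_fan_from_selected_triangles:
  assumes \<phi>: "inj_on \<phi> (fan_V N)" "\<phi> ` fan_V N \<subseteq> \<Union>H"
    and h: "\<And>j. j \<in> {1..N} \<Longrightarrow> berge_triangle H (\<phi> 0, \<phi> (2*j - 1), \<phi> (2*j)) (h j)"
    and \<sigma>: "\<sigma> ` {1..t} \<subseteq> {1..N}" "inj_on \<sigma> {1..t}"
    and distinct: "inj_on (\<lambda>(k, i). h (\<sigma> k) i) ({1..t} \<times> {0, 1, 2})"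
  shows "has_berge H (fan_V t) (fan_E t)"
proof (rule has_berge_fanI[OF _ _ distinct])
  show "inj_on (\<phi> \<circ> fan_relabel \<sigma>) (fan_V t)"
    using fan_relabel_embedding[OF \<sigma>(2,1)] \<phi>(1) by (auto intro: comp_inj_on inj_on_subset)
  show "(\<phi> \<circ> fan_relabel \<sigma>) ` fan_V t \<subseteq> \<Union>H"
    using fan_relabel_embedding(2)[OF \<sigma>(2,1)] \<phi>(2) by (auto simp: image_comp[symmetric])
  fix k i assume k: "k \<in> {1..t}" and i: "i \<in> {0, 1, 2::nat}"
  have "1 \<le> k" using k by simp
  have j: "\<sigma> k \<in> {1..N}" using \<sigma>(1) k by blast
  have "(\<phi> \<circ> fan_relabel \<sigma>) ` tri_edge (0, 2*k - 1, 2*k) i = \<phi> ` tri_edge (0, 2 * \<sigma> k - 1, 2 * \<sigma> k) i"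
    by (simp only: image_comp[symmetric] fan_relabel_triangle[OF \<open>1 \<le> k\<close>])
  also have "\<dots> \<subseteq> h (\<sigma> k) i"
    by (rule berge_triangle_image_edge[where \<phi> = \<phi>, OF h[OF j] i])
  finally show "h (\<sigma> k) i \<in> H \<and> (\<phi> \<circ> fan_relabel \<sigma>) ` tri_edge (0, 2*k - 1, 2*k) i \<subseteq> h (\<sigma> k) i"
    using h[OF j] i unfolding berge_triangle_def by blast
qed

lemma berge_fan_from_cored_shadow_fan:
  assumes "uniform r H" and "0 < r" and "t * (3 * r) \<le> N"
    and "shadow_copy_with_cores H (fan_V N) (fan_E N) (fan_triangles N)"
  shows "has_berge H (fan_V t) (fan_E t)"
proof -
  obtain \<phi> where \<phi>: "inj_on \<phi> (fan_V N)" "\<phi> ` fan_V N \<subseteq> \<Union>H"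
    and cores: "\<forall>j\<in>{1..N}. berge_triangle_core H (\<phi> 0) (\<phi> (2*j - 1)) (\<phi> (2*j))"
    using assms(4) unfolding shadow_copy_with_cores_def fan_triangles_def by fast
  obtain h where h: "\<And>j. j \<in> {1..N} \<Longrightarrow> berge_triangle H (\<phi> 0, \<phi> (2*j - 1), \<phi> (2*j)) (h j)"
    using cores unfolding berge_triangle_core_iff by metis
  define P where "P j = \<phi> ` {2*j - 1, 2*j}" for j
  have disjoint: "disjoint_family_on P {1..N}"
    unfolding disjoint_family_on_def
  proof (intro ballI impI)
    fix j j' assume "j \<in> {1..N}" "j' \<in> {1..N}" "j \<noteq> j'"
    then have "{2*j - 1, 2*j} \<inter> {2*j' - 1, 2*j'} = {}"
      and "{2*j - 1, 2*j} \<subseteq> fan_V N" "{2*j' - 1, 2*j'} \<subseteq> fan_V N"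
      unfolding fan_V_def by auto
    then show "P j \<inter> P j' = {}"
      unfolding P_def using inj_on_image_Int[OF \<phi>(1)] by (metis image_empty)
  qed
  have triangles: "inj_on (h j) {0, 1, 2} \<and> h j ` {0, 1, 2} \<subseteq> H \<and> (\<forall>i\<in>{0, 1, 2}. h j i \<inter> P j \<noteq> {})"
    if "j \<in> {1..N}" for j
    using h[OF that] unfolding berge_triangle_def P_def by auto
  have size: "t * (card {0, 1, 2::nat} * r) \<le> card {1..N}" using assms(3) by (simp add: algebra_simps)
  obtain \<sigma> where "\<sigma> ` {1..t} \<subseteq> {1..N}" "inj_on \<sigma> {1..t}"
    and "inj_on (\<lambda>(k, i). h (\<sigma> k) i) ({1..t} \<times> {0, 1, 2})"
    by (rule select_edge_disjoint_members[OF finite_atLeastAtMost _ _ assms(1,2) disjoint triangles size]) auto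
  then show ?thesis using berge_fan_from_selected_triangles[OF \<phi> h] by blast
qed

lemma berge_book_from_selected_pages:
  assumes \<phi>: "inj_on \<phi> (book_V N)" "\<phi> ` book_V N \<subseteq> \<Union>H"
    and h: "\<And>j. j \<in> {1..N} \<Longrightarrow> berge_triangle H (\<phi> 0, \<phi> 1, \<phi> (j + 1)) (h j)"
    and spine: "spine \<in> H" "\<phi> ` {0, 1} \<subseteq> spine"
    and \<sigma>: "\<sigma> ` {1..t} \<subseteq> {1..N}" "inj_on \<sigma> {1..t}" "\<And>k. k \<in> {1..t} \<Longrightarrow> \<phi> (\<sigma> k + 1) \<notin> spine"
    and distinct: "inj_on (\<lambda>(k, i). h (\<sigma> k) i) ({1..t} \<times> {1, 2})"
  shows "has_berge H (book_V t) (book_E t)"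
proof (rule has_berge_bookI[OF _ _ spine(1) _ distinct])
  show "inj_on (\<phi> \<circ> book_relabel \<sigma>) (book_V t)"
    using book_relabel_embedding[OF \<sigma>(2,1)] \<phi>(1) by (auto intro: comp_inj_on inj_on_subset)
  show "(\<phi> \<circ> book_relabel \<sigma>) ` book_V t \<subseteq> \<Union>H"
    using book_relabel_embedding(2)[OF \<sigma>(2,1)] \<phi>(2) by (auto simp: image_comp[symmetric])
  show "(\<phi> \<circ> book_relabel \<sigma>) ` {0, 1} \<subseteq> spine"
    using spine(2) by (simp add: book_relabel_def)
  have page: "h (\<sigma> k) i \<in> H \<and> \<phi> ` tri_edge (0, 1, \<sigma> k + 1) i \<subseteq> h (\<sigma> k) i"
    if "k \<in> {1..t}" "i \<in> {1, 2::nat}" for k i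
  proof -
    have "\<sigma> k \<in> {1..N}" using \<sigma>(1) that(1) by blast
    then show ?thesis
      using berge_triangle_image_edge[where \<phi> = \<phi>, OF h] h that(2) unfolding berge_triangle_def by auto
  qed
  then show "spine \<notin> (\<lambda>(k, i). h (\<sigma> k) i) ` ({1..t} \<times> {1, 2})"
    using \<sigma>(3) by fastforce
  fix k i assume k: "k \<in> {1..t}" and i: "i \<in> {1, 2::nat}"
  have "1 \<le> k" using k by simp
  then have "(\<phi> \<circ> book_relabel \<sigma>) ` tri_edge (0, 1, k + 1) i = \<phi> ` tri_edge (0, 1, \<sigma> k + 1) i"
    by (simp only: image_comp[symmetric] book_relabel_triangle)
  then show "h (\<sigma> k) i \<in> H \<and> (\<phi> \<circ> book_relabel \<sigma>) ` tri_edge (0, 1, k + 1) i \<subseteq> h (\<sigma> k) i"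
    using page[OF k i] by simp
qed

lemma berge_book_from_cored_shadow_book:
  assumes "uniform r H" and "0 < r" and "t * (2 * r) + r \<le> N"
    and "shadow_copy_with_cores H (book_V N) (book_E N) (book_triangles N)"
  shows "has_berge H (book_V t) (book_E t)"
proof -
  obtain \<phi> where \<phi>: "inj_on \<phi> (book_V N)" "\<phi> ` book_V N \<subseteq> \<Union>H"
    and cores: "\<forall>j\<in>{1..N}. berge_triangle_core H (\<phi> 0) (\<phi> 1) (\<phi> (j + 1))"
    using assms(4) unfolding shadow_copy_with_cores_def book_triangles_def by fast
  obtain h where h: "\<And>j. j \<in> {1..N} \<Longrightarrow> berge_triangle H (\<phi> 0, \<phi> 1, \<phi> (j + 1)) (h j)"
    using cores unfolding berge_triangle_core_iff by metis
  have "1 \<in> {1..N}" using assms(2,3) by simp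
  define spine where "spine = h 1 0"
  have spine: "spine \<in> H" "\<phi> ` {0, 1} \<subseteq> spine"
    using h[OF \<open>1 \<in> {1..N}\<close>] unfolding spine_def berge_triangle_def by auto
  have "finite spine" "card spine = r"
    using spine(1) assms(1,2) unfolding uniform_def by (auto intro: card_ge_0_finite)
  define I where "I = {j \<in> {1..N}. \<phi> (j + 1) \<notin> spine}"
  have "inj_on (\<lambda>j. \<phi> (j + 1)) ({1..N} - I)"
    by (rule inj_onI) (use inj_onD[OF \<phi>(1)] in \<open>auto simp: book_V_def\<close>)
  then have "card ({1..N} - I) \<le> r"
    using \<open>card spine = r\<close> card_inj_on_le[of _ _ spine] \<open>finite spine\<close> unfolding I_def by fastforce
  moreover have "card ({1..N} - I) = N - card I"
    by (subst card_Diff_subset) (auto simp: I_def)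
  ultimately have size: "t * (card {1, 2::nat} * r) \<le> card I"
    using assms(3) by (simp add: algebra_simps)
  define P where "P j = {\<phi> (j + 1)}" for j
  have disjoint: "disjoint_family_on P I"
    unfolding disjoint_family_on_def P_def I_def using inj_onD[OF \<phi>(1)] by (auto simp: book_V_def)
  have triangles: "inj_on (h j) {1, 2} \<and> h j ` {1, 2} \<subseteq> H \<and> (\<forall>i\<in>{1, 2}. h j i \<inter> P j \<noteq> {})"
    if "j \<in> I" for j
    using h[of j] that unfolding berge_triangle_def P_def I_def by (auto simp: inj_on_def)
  obtain \<sigma> where \<sigma>: "\<sigma> ` {1..t} \<subseteq> I" "inj_on \<sigma> {1..t}"
    and distinct: "inj_on (\<lambda>(k, i). h (\<sigma> k) i) ({1..t} \<times> {1, 2})"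
    by (rule select_edge_disjoint_members[OF _ _ _ assms(1,2) disjoint triangles size])
      (auto simp: I_def)
  have "\<sigma> ` {1..t} \<subseteq> {1..N}" and "\<And>k. k \<in> {1..t} \<Longrightarrow> \<phi> (\<sigma> k + 1) \<notin> spine"
    using \<sigma>(1) unfolding I_def by blast+
  then show ?thesis
    using berge_book_from_selected_pages[OF \<phi> h spine _ \<sigma>(2) _ distinct] by blast
qed

theorem proposition4:
  fixes H :: "'a set set" and t r :: nat
  assumes "t \<ge> 1" and "r \<ge> 2" and "finite H" and "uniform r H"
  shows "(\<not> has_berge H (book_V t) (book_E t) \<longrightarrow>
            \<not> shadow_copy_with_cores H (book_V (3*r*t)) (book_E (3*r*t)) (book_triangles (3*r*t)))
       \<and> (\<not> has_berge H (fan_V t) (fan_E t) \<longrightarrow>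
            \<not> shadow_copy_with_cores H (fan_V (3*r*t)) (fan_E (3*r*t)) (fan_triangles (3*r*t)))"
proof -
  have "0 < r" using assms(2) by simp
  moreover have "r \<le> r * t" using assms(1) by simp
  then have "t * (2 * r) + r \<le> 3 * r * t" and "t * (3 * r) \<le> 3 * r * t"
    by (simp_all add: algebra_simps)
  ultimately show ?thesis
    using berge_book_from_cored_shadow_book[OF assms(4)] berge_fan_from_cored_shadow_fan[OF assms(4)]
    by blast
qed

end
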